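(* Let $\Gamma$ be a countably infinite discrete amenable group and $f\in\mathbb{Z}\Gamma$. The following are equivalent: (1) $f$ is a right zero-divisor in $\mathbb{Z}\Gamma$; (2) $\{v\in\ell^2(\Gamma,\mathbb{R}): f^*\cdot v=0\}\neq\{0\}$; (3) $f$ is a left zero-divisor in $\mathbb{Z}\Gamma$; (4) $\{v\in\ell^2(\Gamma,\mathbb{R}): f\cdot v=0\}\neq\{0\}$; (5) $\{v\in\ell^2(\Gamma,\mathbb{R}): v\cdot f^*=0\}\neq\{0\}$.
   Context: $\mathbb{Z}\Gamma$ is the integral group ring. For $g=\sum_\gamma g_\gamma\cdot\gamma$, the adjoint is $g^*=\sum_\gamma g_\gamma\cdot\gamma^{-1}$. $f$ is a right (resp. left) zero-divisor if $gf=0$ (resp. $fg=0$) for some nonzero $g\in\mathbb{Z}\Gamma$. For $v\in\ell^2(\Gamma,\mathbb{R})$ and $h\in\mathbb{Z}\Gamma$, the convolutions are $(h\cdot v)_\gamma=\sum_{\gamma'}h_{\gamma'}v_{\gamma'^{-1}\gamma}$ and $(v\cdot h)_\gamma=\sum_{\gamma'}v_{\gamma'}h_{\gamma'^{-1}\gamma}$. *)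

theory Defs
  imports "HOL-Analysis.Analysis" "HOL-Algebra.Group"
begin

definition amenable :: "('a, 'b) monoid_scheme \<Rightarrow> bool" where
  "amenable G \<longleftrightarrow> (\<forall>K e. finite K \<and> K \<subseteq> carrier G \<and> (e::real) > 0 \<longrightarrow>
     (\<exists>F. finite F \<and> F \<noteq> {} \<and> F \<subseteq> carrier G \<and>
        (\<forall>g\<in>K. real (card (((\<lambda>x. g \<otimes>\<^bsub>G\<^esub> x) ` F - F) \<union> (F - (\<lambda>x. g \<otimes>\<^bsub>G\<^esub> x) ` F)))
                 < e * real (card F))))"

definition group_ring :: "('a, 'b) monoid_scheme \<Rightarrow> ('a \<Rightarrow> int) set" where
  "group_ring G = {f. finite {x \<in> carrier G. f x \<noteq> 0} \<and> (\<forall>x. x \<notin> carrier G \<longrightarrow> f x = 0)}"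

definition l2 :: "('a, 'b) monoid_scheme \<Rightarrow> ('a \<Rightarrow> real) set" where
  "l2 G = {v. (\<lambda>x. (v x)\<^sup>2) summable_on carrier G \<and> (\<forall>x. x \<notin> carrier G \<longrightarrow> v x = 0)}"

definition adjoint :: "('a, 'b) monoid_scheme \<Rightarrow> ('a \<Rightarrow> 'c::zero) \<Rightarrow> 'a \<Rightarrow> 'c" where
  "adjoint G f = (\<lambda>x. if x \<in> carrier G then f (inv\<^bsub>G\<^esub> x) else 0)"

text \<open>Convolution (a . b)(gamma) = sum over gamma' of a(gamma') b(gamma'^-1 gamma), where the
  left factor a is finitely supported (sum over the support of a).\<close>
definition lconv :: "('a, 'b) monoid_scheme \<Rightarrow> ('a \<Rightarrow> 'c::comm_ring) \<Rightarrow> ('a \<Rightarrow> 'c) \<Rightarrow> 'a \<Rightarrow> 'c" where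
  "lconv G a b = (\<lambda>y. if y \<in> carrier G then
      (\<Sum>x\<in>{x \<in> carrier G. a x \<noteq> 0}. a x * b (inv\<^bsub>G\<^esub> x \<otimes>\<^bsub>G\<^esub> y)) else 0)"

text \<open>Same convolution formula, where the right factor b is finitely supported
  (sum over those gamma' with b(gamma'^-1 gamma) nonzero).\<close>
definition rconv :: "('a, 'b) monoid_scheme \<Rightarrow> ('a \<Rightarrow> 'c::comm_ring) \<Rightarrow> ('a \<Rightarrow> 'c) \<Rightarrow> 'a \<Rightarrow> 'c" where
  "rconv G a b = (\<lambda>y. if y \<in> carrier G then
      (\<Sum>x\<in>{x \<in> carrier G. b (inv\<^bsub>G\<^esub> x \<otimes>\<^bsub>G\<^esub> y) \<noteq> 0}. a x * b (inv\<^bsub>G\<^esub> x \<otimes>\<^bsub>G\<^esub> y)) else 0)"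

definition right_zero_divisor :: "('a, 'b) monoid_scheme \<Rightarrow> ('a \<Rightarrow> int) \<Rightarrow> bool" where
  "right_zero_divisor G f \<longleftrightarrow> (\<exists>g \<in> group_ring G. g \<noteq> (\<lambda>_. 0) \<and> lconv G g f = (\<lambda>_. 0))"

definition left_zero_divisor :: "('a, 'b) monoid_scheme \<Rightarrow> ('a \<Rightarrow> int) \<Rightarrow> bool" where
  "left_zero_divisor G f \<longleftrightarrow> (\<exists>g \<in> group_ring G. g \<noteq> (\<lambda>_. 0) \<and> lconv G f g = (\<lambda>_. 0))"

end

theory Submission
  imports Defs "HOL-Algebra.Coset"
begin

text \<open>The equivalences (1) <-> (3) and (2) <-> (4) come from the adjoint, an anti-automorphism
  of the group ring, and (4) <-> (5) from the adjoint on l2; (3) -> (4) is immediate. The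
  content is (2) -> (3). Suppose f* v = 0 with v in l2 nonzero, v x0 \<noteq> 0, but f is not a
  left zero-divisor. For finite F, left multiplication by f is then injective on integer
  functions supported on F, so its image in the real functions on E = supp f <#> F contains
  card F orthogonal vectors. That image is orthogonal to the right translates of v, one for
  each y in E, whose y-coordinate is v x0 and whose norm is at most that of v. Bessel's
  inequality gives card F \<le> card E (1 - c) with c = (v x0)^2 / norm v ^ 2 > 0, and a
  Foelner set F with card E \<le> (1 + c/2) card F makes this impossible.\<close>

definition inner_on :: "'b set \<Rightarrow> ('b \<Rightarrow> 'r::comm_semiring_0) \<Rightarrow> ('b \<Rightarrow> 'r) \<Rightarrow> 'r" where
  "inner_on E a b = (\<Sum>y\<in>E. a y * b y)"

lemma inner_on_commute: "inner_on E a b = inner_on E b a"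
  by (simp add: inner_on_def mult.commute)

lemma inner_on_diff_right:
  "inner_on E a (\<lambda>y. b y - c y) = inner_on E a b - (inner_on E a c :: 'r::comm_ring)"
  by (simp add: inner_on_def right_diff_distrib sum_subtractf)

lemma inner_on_lincomb_right:
  "inner_on E a (\<lambda>y. \<Sum>i\<in>I. c i * b i y) = (\<Sum>i\<in>I. c i * inner_on E a (b i))"
  by (simp add: inner_on_def sum_distrib_left sum_distrib_right sum.swap[of _ E] mult.left_commute)

lemma inner_on_orthogonal_lincomb_right:
  assumes "finite I" "j \<in> I" "pairwise (\<lambda>i k. inner_on E (b i) (b k) = 0) I"
  shows "inner_on E (b j) (\<lambda>y. \<Sum>i\<in>I. c i * b i y) = c j * inner_on E (b j) (b j)"
proof -
  have "(\<Sum>i\<in>I - {j}. c i * inner_on E (b j) (b i)) = 0"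
    using assms(2,3) by (intro sum.neutral) (fastforce simp: pairwise_def)
  then show ?thesis
    unfolding inner_on_lincomb_right using assms(1,2) by (simp add: sum.remove)
qed

lemma inner_on_unit_vector:
  fixes a :: "'b \<Rightarrow> 'r::comm_semiring_1"
  assumes "finite E" "y \<in> E"
  shows "inner_on E a (\<lambda>z. if z = y then 1 else 0) = a y"
  using assms by (simp add: inner_on_def if_distrib cong: if_cong)

lemma inner_on_self_eq_0_iff:
  assumes "finite E"
  shows "inner_on E a a = (0::'r::linordered_idom) \<longleftrightarrow> (\<forall>y\<in>E. a y = 0)"
  using assms by (simp add: inner_on_def sum_nonneg_eq_0_iff)

lemma inner_on_of_int:
  "inner_on E (\<lambda>y. of_int (a y)) (\<lambda>y. of_int (b y)) = (of_int (inner_on E a b) :: 'r::comm_ring_1)"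
  by (simp add: inner_on_def)

lemma linear_map_lincomb:
  fixes L :: "('a \<Rightarrow> 'r::comm_ring_1) \<Rightarrow> 'b \<Rightarrow> 'r"
  assumes add: "\<And>a b. L (\<lambda>x. a x + b x) = (\<lambda>y. L a y + L b y)"
    and scale: "\<And>c a. L (\<lambda>x. c * a x) = (\<lambda>y. c * L a y)"
  shows "L (\<lambda>x. \<Sum>i\<in>I. c i * u i x) = (\<lambda>y. \<Sum>i\<in>I. c i * L (u i) y)"
proof (induction I rule: infinite_finite_induct)
  case (insert i I)
  then show ?case by (simp add: add scale)
qed (use scale[of 0 "\<lambda>_. 0"] in simp_all)

text \<open>Gram--Schmidt without division: the new vector is scaled by the product of the
  squared norms already present, so that all coefficients stay in the ring.\<close>
lemma fraction_free_gram_schmidt: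
  fixes L :: "('a \<Rightarrow> 'r::linordered_idom) \<Rightarrow> 'b \<Rightarrow> 'r"
  assumes add: "\<And>a b. L (\<lambda>x. a x + b x) = (\<lambda>y. L a y + L b y)"
    and scale: "\<And>c a. L (\<lambda>x. c * a x) = (\<lambda>y. c * L a y)"
    and inj: "\<And>u. \<forall>x. x \<notin> X \<longrightarrow> u x = 0 \<Longrightarrow> \<forall>y\<in>E. L u y = 0 \<Longrightarrow> u = (\<lambda>_. 0)"
    and "finite E" "finite X"
  shows "\<exists>U. finite U \<and> card U = card X \<and> (\<forall>u\<in>U. \<forall>x. x \<notin> X \<longrightarrow> u x = 0)
           \<and> (\<forall>u\<in>U. inner_on E (L u) (L u) \<noteq> 0)
           \<and> pairwise (\<lambda>u w. inner_on E (L u) (L w) = 0) U"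
proof -
  have "\<exists>U. finite U \<and> card U = card Y \<and> (\<forall>u\<in>U. \<forall>x. x \<notin> Y \<longrightarrow> u x = 0)
           \<and> (\<forall>u\<in>U. inner_on E (L u) (L u) \<noteq> 0)
           \<and> pairwise (\<lambda>u w. inner_on E (L u) (L w) = 0) U" if "Y \<subseteq> X" for Y
    using finite_subset[OF that \<open>finite X\<close>] that
  proof (induction Y rule: finite_subset_induct')
    case empty
    show ?case by (intro exI[of _ "{}"]) simp
  next
    case (insert x Y)
    then obtain U where U: "finite U" "card U = card Y" "\<forall>u\<in>U. \<forall>x. x \<notin> Y \<longrightarrow> u x = 0"
      "\<forall>u\<in>U. inner_on E (L u) (L u) \<noteq> 0" "pairwise (\<lambda>u w. inner_on E (L u) (L w) = 0) U"
      by blast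
    define \<delta> :: "'a \<Rightarrow> 'r" where "\<delta> z = (if z = x then 1 else 0)" for z
    define P where "P = (\<Prod>u\<in>U. inner_on E (L u) (L u))"
    define d where "d u = (\<Prod>u'\<in>U - {u}. inner_on E (L u') (L u')) * inner_on E (L u) (L \<delta>)" for u
    define u0 where "u0 z = P * \<delta> z - (\<Sum>u\<in>U. d u * u z)" for z
    have "u0 = (\<lambda>z. P * \<delta> z + (- 1) * (\<Sum>u\<in>U. d u * u z))"
      by (simp add: u0_def fun_eq_iff)
    moreover have "L (\<lambda>z. \<Sum>u\<in>U. d u * u z) = (\<lambda>y. \<Sum>u\<in>U. d u * L u y)"
      by (rule linear_map_lincomb[OF add scale])
    ultimately have L_u0: "L u0 = (\<lambda>y. P * L \<delta> y - (\<Sum>u\<in>U. d u * L u y))"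
      by (simp only: add scale) simp
    have "P \<noteq> 0"
      using U(1,4) by (simp add: P_def)
    have u0_x: "u0 x = P"
      using U(3) insert.hyps(4) by (auto simp: u0_def \<delta>_def intro!: sum.neutral)
    have u0_supp: "\<forall>z. z \<notin> insert x Y \<longrightarrow> u0 z = 0"
      using U(3) by (auto simp: u0_def \<delta>_def intro!: sum.neutral)
    have u0_nz: "inner_on E (L u0) (L u0) \<noteq> 0"
    proof
      assume "inner_on E (L u0) (L u0) = 0"
      then have "\<forall>y\<in>E. L u0 y = 0"
        using inner_on_self_eq_0_iff[OF \<open>finite E\<close>] by blast
      moreover have "\<forall>z. z \<notin> X \<longrightarrow> u0 z = 0"
        using u0_supp insert.hyps(2,3) by auto
      ultimately have "u0 = (\<lambda>_. 0)"
        by (rule inj[rotated])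
      then show False using u0_x \<open>P \<noteq> 0\<close> by simp
    qed
    have u0_orth: "inner_on E (L w) (L u0) = 0" if "w \<in> U" for w
    proof -
      have "d w * inner_on E (L w) (L w) = P * inner_on E (L w) (L \<delta>)"
        using U(1) that by (simp add: d_def P_def prod.remove[of U w] algebra_simps)
      then show ?thesis
        unfolding L_u0 inner_on_diff_right
        using inner_on_orthogonal_lincomb_right[where I=U and j=w and b="\<lambda>u. L u" and c=d] U(1,5) that
        by (simp add: inner_on_def sum_distrib_left mult.left_commute)
    qed
    have "u0 \<notin> U"
      using U(3) insert.hyps(4) u0_x \<open>P \<noteq> 0\<close> by auto
    show ?case
    proof (intro exI[of _ "insert u0 U"] conjI)
      show "finite (insert u0 U)"
        using U(1) by simp
      show "card (insert u0 U) = card (insert x Y)"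
        using U(1,2) \<open>u0 \<notin> U\<close> insert.hyps(1,4) by simp
      show "\<forall>u\<in>insert u0 U. \<forall>z. z \<notin> insert x Y \<longrightarrow> u z = 0"
        using U(3) u0_supp by auto
      show "\<forall>u\<in>insert u0 U. inner_on E (L u) (L u) \<noteq> 0"
        using U(4) u0_nz by auto
      show "pairwise (\<lambda>u w. inner_on E (L u) (L w) = 0) (insert u0 U)"
        using U(5) u0_orth inner_on_commute[of E "L u0"] by (simp add: pairwise_insert)
    qed
  qed
  then show ?thesis by blast
qed

lemma bessel_inequality_on:
  fixes V :: "('b \<Rightarrow> 'r::linordered_field) set"
  assumes "finite V" and nz: "\<forall>v\<in>V. inner_on E v v \<noteq> 0"
    and orth: "pairwise (\<lambda>v w. inner_on E v w = 0) V"
  shows "(\<Sum>v\<in>V. (inner_on E v x)\<^sup>2 / inner_on E v v) \<le> inner_on E x x"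
proof -
  define c where "c v = inner_on E v x / inner_on E v v" for v
  define p where "p z = (\<Sum>v\<in>V. c v * v z)" for z
  have v_p: "inner_on E v p = inner_on E v x" if "v \<in> V" for v
    using inner_on_orthogonal_lincomb_right[where I=V and j=v and b="\<lambda>v. v" and c=c and E=E]
      \<open>finite V\<close> orth that nz by (simp add: p_def[abs_def] c_def)
  have p_lin: "inner_on E q p = (\<Sum>v\<in>V. c v * inner_on E v q)" for q
    unfolding p_def[abs_def] inner_on_lincomb_right by (simp add: inner_on_commute)
  have "inner_on E p x = (\<Sum>v\<in>V. c v * inner_on E v x)"
    using p_lin[of x] by (simp add: inner_on_commute)
  also have "\<dots> = inner_on E p p"
    using p_lin[of p] v_p by simp
  finally have p_x: "inner_on E p x = inner_on E p p" .
  have p_p: "inner_on E p p = (\<Sum>v\<in>V. (inner_on E v x)\<^sup>2 / inner_on E v v)"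
    using p_lin[of p] v_p by (simp add: c_def power2_eq_square)
  have "0 \<le> inner_on E (\<lambda>z. x z - p z) (\<lambda>z. x z - p z)"
    by (simp add: inner_on_def sum_nonneg)
  also have "\<dots> = inner_on E x x - 2 * inner_on E p x + inner_on E p p"
  proof -
    have "(x z - p z) * (x z - p z) = x z * x z - 2 * (p z * x z) + p z * p z" for z
      by (simp add: algebra_simps)
    then show ?thesis
      by (simp add: inner_on_def sum.distrib sum_subtractf sum_distrib_left)
  qed
  finally show ?thesis
    using p_p p_x by simp
qed

text \<open>Bessel's inequality for the coordinate vector at y and the orthogonal set
  V \<union> {r y}, summed over y.\<close>
lemma card_orthogonal_le:
  fixes V :: "('b \<Rightarrow> real) set" and r :: "'b \<Rightarrow> 'b \<Rightarrow> real"
  assumes "finite V" "finite E"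
    and nz: "\<forall>v\<in>V. inner_on E v v \<noteq> 0" and orth: "pairwise (\<lambda>v w. inner_on E v w = 0) V"
    and perp: "\<forall>y\<in>E. \<forall>v\<in>V. inner_on E v (r y) = 0"
    and diag: "\<forall>y\<in>E. r y y = a" and "a \<noteq> 0"
    and norm: "\<forall>y\<in>E. inner_on E (r y) (r y) \<le> N"
  shows "real (card V) \<le> real (card E) * (1 - a\<^sup>2 / N)"
proof -
  define e :: "'b \<Rightarrow> 'b \<Rightarrow> real" where "e y = (\<lambda>z. if z = y then 1 else 0)" for y
  have row: "(\<Sum>v\<in>V. (v y)\<^sup>2 / inner_on E v v) \<le> 1 - a\<^sup>2 / N" if y: "y \<in> E" for y
  proof -
    have "a\<^sup>2 \<le> inner_on E (r y) (r y)"
      using member_le_sum[of y E "\<lambda>z. (r y z)\<^sup>2"] y diag \<open>finite E\<close>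
      by (simp add: inner_on_def power2_eq_square)
    moreover have "0 < a\<^sup>2"
      using \<open>a \<noteq> 0\<close> by simp
    ultimately have r_pos: "0 < inner_on E (r y) (r y)"
      by linarith
    have r_le: "inner_on E (r y) (r y) \<le> N"
      using norm y by blast
    have "r y \<notin> V"
      using perp y r_pos by auto
    have "\<forall>v\<in>V. inner_on E (r y) v = 0"
      using perp y by (simp add: inner_on_commute)
    then have "pairwise (\<lambda>v w. inner_on E v w = 0) (insert (r y) V)"
      using perp y orth by (simp add: pairwise_insert)
    moreover have "\<forall>v\<in>insert (r y) V. inner_on E v v \<noteq> 0"
      using nz r_pos by simp
    ultimately have "(\<Sum>v\<in>insert (r y) V. (inner_on E v (e y))\<^sup>2 / inner_on E v v)
        \<le> inner_on E (e y) (e y)"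
      using \<open>finite V\<close> by (intro bessel_inequality_on) auto
    moreover have "inner_on E w (e y) = w y" for w
      unfolding e_def using \<open>finite E\<close> y by (rule inner_on_unit_vector)
    ultimately have "(\<Sum>v\<in>V. (v y)\<^sup>2 / inner_on E v v) + a\<^sup>2 / inner_on E (r y) (r y) \<le> 1"
      using \<open>finite V\<close> \<open>r y \<notin> V\<close> y diag by (simp add: e_def)
    moreover have "a\<^sup>2 / N \<le> a\<^sup>2 / inner_on E (r y) (r y)"
      using r_pos r_le by (simp add: frac_le)
    ultimately show ?thesis by simp
  qed
  have "real (card V) = (\<Sum>v\<in>V. inner_on E v v / inner_on E v v)"
    using nz by simp
  also have "\<dots> = (\<Sum>v\<in>V. \<Sum>y\<in>E. (v y)\<^sup>2 / inner_on E v v)"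
    by (simp add: sum_divide_distrib[symmetric] inner_on_def[of E _ _] power2_eq_square)
  also have "\<dots> = (\<Sum>y\<in>E. \<Sum>v\<in>V. (v y)\<^sup>2 / inner_on E v v)"
    by (rule sum.swap)
  also have "\<dots> \<le> (\<Sum>y\<in>E. 1 - a\<^sup>2 / N)"
    using row by (rule sum_mono)
  finally show ?thesis by simp
qed

abbreviation support :: "('a, 'b) monoid_scheme \<Rightarrow> ('a \<Rightarrow> 'c::zero) \<Rightarrow> 'a set" where
  "support G f \<equiv> {x \<in> carrier G. f x \<noteq> 0}"

abbreviation l2_kernel :: "('a, 'b) monoid_scheme \<Rightarrow> ('a \<Rightarrow> real) \<Rightarrow> ('a \<Rightarrow> real) set" where
  "l2_kernel G a \<equiv> {v \<in> l2 G. lconv G a v = (\<lambda>_. 0)}"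

abbreviation l2_right_kernel :: "('a, 'b) monoid_scheme \<Rightarrow> ('a \<Rightarrow> real) \<Rightarrow> ('a \<Rightarrow> real) set" where
  "l2_right_kernel G a \<equiv> {v \<in> l2 G. rconv G v a = (\<lambda>_. 0)}"

lemma adjoint_of_int: "(\<lambda>x. of_int (adjoint G f x)) = adjoint G (\<lambda>x. of_int (f x))"
  by (auto simp: adjoint_def fun_eq_iff)

lemma lconv_of_int:
  "lconv G (\<lambda>x. real_of_int (a x)) (\<lambda>x. real_of_int (b x)) = (\<lambda>y. real_of_int (lconv G a b y))"
  by (auto simp: lconv_def fun_eq_iff)

lemma lconv_add_right: "lconv G f (\<lambda>x. a x + b x) = (\<lambda>y. lconv G f a y + lconv G f b y)"
  by (auto simp: lconv_def fun_eq_iff distrib_left sum.distrib)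

lemma lconv_scale_right: "lconv G f (\<lambda>x. c * a x) = (\<lambda>y. c * lconv G f a y)"
  by (auto simp: lconv_def fun_eq_iff sum_distrib_left mult.left_commute)

lemma lconv_zero_right: "lconv G a (\<lambda>_. 0) = (\<lambda>_. 0)"
  by (simp add: lconv_def fun_eq_iff)

lemma l2_zero: "(\<lambda>_. 0) \<in> l2 G"
  by (simp add: l2_def)

lemma of_int_group_ring_in_l2:
  assumes "g \<in> group_ring G"
  shows "(\<lambda>x. real_of_int (g x)) \<in> l2 G"
proof -
  have "(\<lambda>x. (real_of_int (g x))\<^sup>2) summable_on support G g"
    using assms by (simp add: group_ring_def)
  then have "(\<lambda>x. (real_of_int (g x))\<^sup>2) summable_on carrier G"
    by (rule summable_on_cong_neutral[THEN iffD1, rotated -1]) auto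
  then show ?thesis
    using assms by (simp add: l2_def group_ring_def)
qed

lemma l2_partial_sum_le:
  assumes "v \<in> l2 G" "finite B" "B \<subseteq> carrier G"
  shows "(\<Sum>x\<in>B. (v x)\<^sup>2) \<le> infsum (\<lambda>x. (v x)\<^sup>2) (carrier G)"
  using assms by (intro finite_sum_le_infsum) (auto simp: l2_def)

lemma l2_kernel_nontrivial_iff:
  "l2_kernel G a \<noteq> {\<lambda>_. 0} \<longleftrightarrow> (\<exists>v\<in>l2 G. v \<noteq> (\<lambda>_. 0) \<and> lconv G a v = (\<lambda>_. 0))"
  using l2_zero[of G] lconv_zero_right[of G a] by blast

lemma left_zero_divisor_imp_l2_kernel:
  assumes "left_zero_divisor G f"
  shows "l2_kernel G (\<lambda>x. real_of_int (f x)) \<noteq> {\<lambda>_. 0}"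
proof -
  obtain g where g: "g \<in> group_ring G" "g \<noteq> (\<lambda>_. 0)" "lconv G f g = (\<lambda>_. 0)"
    using assms unfolding left_zero_divisor_def by blast
  then have "lconv G (\<lambda>x. real_of_int (f x)) (\<lambda>x. real_of_int (g x)) = (\<lambda>_. 0)"
    by (simp add: lconv_of_int)
  moreover have "(\<lambda>x. real_of_int (g x)) \<noteq> (\<lambda>_. 0)"
    using g(2) by (auto simp: fun_eq_iff)
  ultimately show ?thesis
    unfolding l2_kernel_nontrivial_iff using of_int_group_ring_in_l2[OF g(1)] by blast
qed

context group
begin

lemma adjoint_adjoint:
  assumes "\<And>x. x \<notin> carrier G \<Longrightarrow> f x = 0"
  shows "adjoint G (adjoint G f) = f"
  using assms by (auto simp: adjoint_def fun_eq_iff)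

lemma adjoint_eq_0_iff:
  assumes "\<And>x. x \<notin> carrier G \<Longrightarrow> f x = 0"
  shows "adjoint G f = (\<lambda>_. 0) \<longleftrightarrow> f = (\<lambda>_. 0)"
  by (metis adjoint_adjoint assms adjoint_def)

lemma adjoint_in_group_ring:
  assumes "f \<in> group_ring G"
  shows "adjoint G f \<in> group_ring G"
proof -
  have "support G (adjoint G f) = (\<lambda>x. inv x) ` support G f"
    by (auto simp: adjoint_def image_iff intro!: exI[of _ "inv _"])
  then show ?thesis
    using assms by (auto simp: group_ring_def adjoint_def)
qed

lemma adjoint_in_l2:
  assumes "v \<in> l2 G"
  shows "adjoint G v \<in> l2 G"
proof -
  have "(\<lambda>x. (adjoint G v x)\<^sup>2) summable_on carrier G \<longleftrightarrow> (\<lambda>x. (v x)\<^sup>2) summable_on carrier G"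
    by (rule summable_on_reindex_bij_witness[where i="\<lambda>x. inv x" and j="\<lambda>x. inv x"]) (auto simp: adjoint_def)
  then show ?thesis
    using assms by (auto simp: l2_def adjoint_def)
qed

lemma lconv_eq_sum_nonzero_terms:
  assumes "finite (support G a)" "y \<in> carrier G"
  shows "lconv G a b y = (\<Sum>x\<in>{x \<in> carrier G. a x * b (inv x \<otimes> y) \<noteq> 0}. a x * b (inv x \<otimes> y))"
  using assms unfolding lconv_def by (auto intro!: sum.mono_neutral_right)

lemma lconv_adjoint:
  assumes "a \<in> group_ring G" "b \<in> group_ring G" "y \<in> carrier G"
  shows "lconv G a b (inv y) = lconv G (adjoint G b) (adjoint G a) y"
proof -
  have "lconv G a b (inv y)
      = (\<Sum>x\<in>{x \<in> carrier G. a x * b (inv x \<otimes> inv y) \<noteq> 0}. a x * b (inv x \<otimes> inv y))"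
    using assms by (intro lconv_eq_sum_nonzero_terms) (auto simp: group_ring_def)
  also have "\<dots> = (\<Sum>t\<in>{x \<in> carrier G. adjoint G b x * adjoint G a (inv x \<otimes> y) \<noteq> 0}.
                    adjoint G b t * adjoint G a (inv t \<otimes> y))"
  proof (rule sum.reindex_bij_witness[where i="\<lambda>t. inv y \<otimes> t" and j="\<lambda>x. y \<otimes> x"])
    fix t assume t: "t \<in> {x \<in> carrier G. adjoint G b x * adjoint G a (inv x \<otimes> y) \<noteq> 0}"
    then have tc: "t \<in> carrier G" by auto
    have "inv (inv y \<otimes> t) \<otimes> inv y = inv t" "inv t \<otimes> y = inv (inv y \<otimes> t)"
      using tc assms(3) by (simp_all add: inv_mult_group m_assoc)
    then show "inv y \<otimes> t \<in> {x \<in> carrier G. a x * b (inv x \<otimes> inv y) \<noteq> 0}"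
      using t tc assms(3) by (auto simp: adjoint_def mult.commute)
    show "y \<otimes> (inv y \<otimes> t) = t"
      using tc assms(3) by (simp add: m_assoc[symmetric])
  next
    fix x assume x: "x \<in> {x \<in> carrier G. a x * b (inv x \<otimes> inv y) \<noteq> 0}"
    then have xc: "x \<in> carrier G" by auto
    have eqs: "inv (y \<otimes> x) = inv x \<otimes> inv y" "inv (y \<otimes> x) \<otimes> y = inv x" "inv x \<otimes> inv y \<otimes> y = inv x"
      using xc assms(3) by (simp_all add: inv_mult_group m_assoc)
    show "inv y \<otimes> (y \<otimes> x) = x"
      using xc assms(3) by (simp add: m_assoc[symmetric])
    show "y \<otimes> x \<in> {x \<in> carrier G. adjoint G b x * adjoint G a (inv x \<otimes> y) \<noteq> 0}"
      using x xc assms(3) by (auto simp: adjoint_def eqs mult.commute)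
    show "adjoint G b (y \<otimes> x) * adjoint G a (inv (y \<otimes> x) \<otimes> y) = a x * b (inv x \<otimes> inv y)"
      using xc assms(3) by (simp add: adjoint_def eqs mult.commute)
  qed
  also have "\<dots> = lconv G (adjoint G b) (adjoint G a) y"
    using adjoint_in_group_ring[OF assms(2)] assms(3)
    by (intro lconv_eq_sum_nonzero_terms[symmetric]) (auto simp: group_ring_def)
  finally show ?thesis .
qed

lemma lconv_eq_0_adjoint:
  assumes "a \<in> group_ring G" "b \<in> group_ring G" "lconv G a b = (\<lambda>_. 0)"
  shows "lconv G (adjoint G b) (adjoint G a) = (\<lambda>_. 0)"
proof
  fix y
  show "lconv G (adjoint G b) (adjoint G a) y = 0"
    using lconv_adjoint[OF assms(1,2), of y] fun_cong[OF assms(3), of "inv y"]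
    by (cases "y \<in> carrier G") (auto simp: lconv_def)
qed

lemma right_zero_divisor_iff_left_zero_divisor_adjoint:
  assumes "f \<in> group_ring G"
  shows "right_zero_divisor G f \<longleftrightarrow> left_zero_divisor G (adjoint G f)"
proof -
  have adj_adj: "adjoint G (adjoint G g) = g" if "g \<in> group_ring G" for g
    using that by (intro adjoint_adjoint) (simp add: group_ring_def)
  have adj_0: "adjoint G g = (\<lambda>_. 0) \<longleftrightarrow> g = (\<lambda>_. 0)" if "g \<in> group_ring G" for g
    using that by (intro adjoint_eq_0_iff) (simp add: group_ring_def)
  show ?thesis
  proof
    assume "right_zero_divisor G f"
    then obtain g where "g \<in> group_ring G" "g \<noteq> (\<lambda>_. 0)" "lconv G g f = (\<lambda>_. 0)"
      unfolding right_zero_divisor_def by blast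
    then show "left_zero_divisor G (adjoint G f)"
      unfolding left_zero_divisor_def using assms adj_0
      by (blast intro: adjoint_in_group_ring lconv_eq_0_adjoint)
  next
    assume "left_zero_divisor G (adjoint G f)"
    then obtain g where "g \<in> group_ring G" "g \<noteq> (\<lambda>_. 0)" "lconv G (adjoint G f) g = (\<lambda>_. 0)"
      unfolding left_zero_divisor_def by blast
    then have "lconv G (adjoint G g) f = (\<lambda>_. 0)"
      using lconv_eq_0_adjoint[of "adjoint G f" g] assms adj_adj by (simp add: adjoint_in_group_ring)
    then show "right_zero_divisor G f"
      unfolding right_zero_divisor_def using \<open>g \<in> group_ring G\<close> \<open>g \<noteq> (\<lambda>_. 0)\<close> adj_0
      by (blast intro: adjoint_in_group_ring)
  qed
qed


lemma rconv_adjoint: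
  assumes "y \<in> carrier G"
  shows "rconv G v (adjoint G a) y = lconv G a (adjoint G v) (inv y)"
  unfolding rconv_def lconv_def using assms
proof (simp, intro sum.reindex_bij_witness[where i="\<lambda>z. y \<otimes> z" and j="\<lambda>x. inv y \<otimes> x"])
  fix x assume x: "x \<in> {x \<in> carrier G. adjoint G a (inv x \<otimes> y) \<noteq> 0}"
  then have xc: "x \<in> carrier G" by auto
  have eqs: "inv (inv x \<otimes> y) = inv y \<otimes> x" "inv (inv y \<otimes> x) \<otimes> inv y = inv x"
    using xc assms by (simp_all add: inv_mult_group m_assoc)
  show "y \<otimes> (inv y \<otimes> x) = x"
    using xc assms by (simp add: m_assoc[symmetric])
  show "inv y \<otimes> x \<in> support G a"
    using x xc assms by (auto simp: adjoint_def eqs)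
  show "a (inv y \<otimes> x) * adjoint G v (inv (inv y \<otimes> x) \<otimes> inv y) = v x * adjoint G a (inv x \<otimes> y)"
    using xc assms by (simp add: adjoint_def eqs mult.commute)
next
  fix z assume z: "z \<in> support G a"
  then have zc: "z \<in> carrier G" by auto
  have "inv (inv (y \<otimes> z) \<otimes> y) = z"
    using zc assms by (simp add: inv_mult_group m_assoc)
  then show "y \<otimes> z \<in> {x \<in> carrier G. adjoint G a (inv x \<otimes> y) \<noteq> 0}"
    using z zc assms by (auto simp: adjoint_def)
  show "inv y \<otimes> (y \<otimes> z) = z"
    using zc assms by (simp add: m_assoc[symmetric])
qed

lemma rconv_adjoint_eq_0_iff:
  "rconv G v (adjoint G a) = (\<lambda>_. 0) \<longleftrightarrow> lconv G a (adjoint G v) = (\<lambda>_. 0)"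
proof
  assume r0: "rconv G v (adjoint G a) = (\<lambda>_. 0)"
  show "lconv G a (adjoint G v) = (\<lambda>_. 0)"
  proof
    fix y
    show "lconv G a (adjoint G v) y = 0"
      using rconv_adjoint[of "inv y" v a] r0 by (cases "y \<in> carrier G") (simp_all add: lconv_def)
  qed
next
  assume l0: "lconv G a (adjoint G v) = (\<lambda>_. 0)"
  show "rconv G v (adjoint G a) = (\<lambda>_. 0)"
  proof
    fix y
    show "rconv G v (adjoint G a) y = 0"
      using rconv_adjoint[of y v a] l0 by (cases "y \<in> carrier G") (simp_all add: rconv_def)
  qed
qed

lemma l2_kernel_nontrivial_iff_right_kernel:
  "l2_kernel G a \<noteq> {\<lambda>_. 0} \<longleftrightarrow> l2_right_kernel G (adjoint G a) \<noteq> {\<lambda>_. 0}"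
proof -
  have adj_adj: "adjoint G (adjoint G v) = v" and adj_0: "adjoint G v = (\<lambda>_. 0) \<longleftrightarrow> v = (\<lambda>_. 0)"
    if "v \<in> l2 G" for v
    using that by (simp_all add: l2_def adjoint_adjoint adjoint_eq_0_iff)
  have "l2_right_kernel G (adjoint G a) = adjoint G ` l2_kernel G a"
  proof (intro equalityI subsetI)
    fix u assume "u \<in> l2_right_kernel G (adjoint G a)"
    then show "u \<in> adjoint G ` l2_kernel G a"
      using adj_adj adjoint_in_l2 rconv_adjoint_eq_0_iff
      by (intro image_eqI[of u _ "adjoint G u"]) auto
  next
    fix u assume "u \<in> adjoint G ` l2_kernel G a"
    then show "u \<in> l2_right_kernel G (adjoint G a)"
      using adj_adj adjoint_in_l2 by (auto simp: rconv_adjoint_eq_0_iff)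
  qed
  moreover have "adjoint G (\<lambda>_. 0) \<in> adjoint G ` l2_kernel G a"
    using lconv_zero_right[of G a] l2_zero[of G] by blast
  ultimately show ?thesis
    using adj_0 l2_zero[of G] lconv_zero_right[of G a] by (auto simp: adjoint_def[of G "\<lambda>_. 0"])
qed

lemma lconv_adjoint_left:
  assumes "y \<in> carrier G"
  shows "lconv G (adjoint G h) v y = (\<Sum>s\<in>support G h. h s * v (s \<otimes> y))"
  unfolding lconv_def using assms
proof (simp, intro sum.reindex_bij_witness[where i="\<lambda>x. inv x" and j="\<lambda>x. inv x"])
  fix s assume "s \<in> {x \<in> carrier G. adjoint G h x \<noteq> 0}"
  then show "inv (inv s) = s" "inv s \<in> support G h"
    "h (inv s) * v (inv s \<otimes> y) = adjoint G h s * v (inv s \<otimes> y)"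
    by (auto simp: adjoint_def)
qed (auto simp: adjoint_def)

lemma lconv_vanishes_outside_set_mult:
  assumes "\<forall>x. x \<notin> F \<longrightarrow> u x = 0" "y \<notin> support G f <#> F"
  shows "lconv G f u y = 0"
proof (cases "y \<in> carrier G")
  case True
  have "u (inv s \<otimes> y) = 0" if "s \<in> support G f" for s
  proof -
    have "s \<otimes> (inv s \<otimes> y) = y"
      using that True by (simp add: m_assoc[symmetric])
    have "inv s \<otimes> y \<notin> F"
    proof
      assume "inv s \<otimes> y \<in> F"
      then have "s \<otimes> (inv s \<otimes> y) \<in> support G f <#> F"
        using that unfolding set_mult_def by blast
      then show False
        using assms(2) \<open>s \<otimes> (inv s \<otimes> y) = y\<close> by simp
    qed
    then show ?thesis
      using assms(1) by simp
  qed
  then show ?thesis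
    by (simp add: lconv_def)
qed (simp add: lconv_def)

text \<open>The adjoint of left multiplication by f is left multiplication by f*, and right
  translation commutes with both.\<close>
lemma inner_on_lconv_translate:
  assumes "finite (support G f)" "finite F" "F \<subseteq> carrier G" "\<forall>x. x \<notin> F \<longrightarrow> u x = 0"
    and g: "g \<in> carrier G"
  shows "inner_on (support G f <#> F) (lconv G f u) (\<lambda>z. v (z \<otimes> g))
       = inner_on F u (\<lambda>x. lconv G (adjoint G f) v (x \<otimes> g))"
proof -
  define S where "S = support G f"
  define E where "E = S <#> F"
  have E_carrier: "E \<subseteq> carrier G"
    unfolding E_def S_def using assms(3) by (auto simp: set_mult_def)
  have "finite E"
    unfolding E_def S_def using assms(1,2) by (simp add: set_mult_def)
  have translate: "(\<Sum>z\<in>E. u (inv s \<otimes> z) * v (z \<otimes> g)) = (\<Sum>x\<in>F. u x * v (s \<otimes> x \<otimes> g))"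
    if s: "s \<in> S" for s
  proof -
    have sG: "s \<in> carrier G"
      using s S_def by auto
    have "(\<Sum>z\<in>E. u (inv s \<otimes> z) * v (z \<otimes> g)) = (\<Sum>z\<in>(\<lambda>x. s \<otimes> x) ` F. u (inv s \<otimes> z) * v (z \<otimes> g))"
    proof (rule sum.mono_neutral_right[OF \<open>finite E\<close>])
      show "(\<lambda>x. s \<otimes> x) ` F \<subseteq> E"
        unfolding E_def using s by (auto simp: set_mult_def)
      show "\<forall>z\<in>E - (\<lambda>x. s \<otimes> x) ` F. u (inv s \<otimes> z) * v (z \<otimes> g) = 0"
      proof
        fix z assume z: "z \<in> E - (\<lambda>x. s \<otimes> x) ` F"
        then have "s \<otimes> (inv s \<otimes> z) = z"
          using sG E_carrier by (auto simp: m_assoc[symmetric])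
        then have "inv s \<otimes> z \<notin> F"
          using z by (metis DiffE image_eqI)
        then show "u (inv s \<otimes> z) * v (z \<otimes> g) = 0"
          using assms(4) by simp
      qed
    qed
    also have "\<dots> = (\<Sum>x\<in>F. u x * v (s \<otimes> x \<otimes> g))"
      using sG assms(3) by (subst sum.reindex) (auto intro!: inj_onI sum.cong simp: subset_iff m_assoc[symmetric])
    finally show ?thesis .
  qed
  have "inner_on E (lconv G f u) (\<lambda>z. v (z \<otimes> g))
      = (\<Sum>z\<in>E. \<Sum>s\<in>S. f s * (u (inv s \<otimes> z) * v (z \<otimes> g)))"
    unfolding inner_on_def
    by (rule sum.cong) (use E_carrier in \<open>auto simp: lconv_def S_def sum_distrib_right mult.assoc\<close>)
  also have "\<dots> = (\<Sum>s\<in>S. f s * (\<Sum>z\<in>E. u (inv s \<otimes> z) * v (z \<otimes> g)))"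
    by (subst sum.swap) (simp add: sum_distrib_left)
  also have "\<dots> = (\<Sum>s\<in>S. \<Sum>x\<in>F. f s * (u x * v (s \<otimes> x \<otimes> g)))"
    by (intro sum.cong) (simp_all add: translate sum_distrib_left)
  also have "\<dots> = (\<Sum>x\<in>F. u x * (\<Sum>s\<in>S. f s * v (s \<otimes> (x \<otimes> g))))"
    using assms(3) g unfolding S_def
    by (subst sum.swap) (auto simp: sum_distrib_left m_assoc mult.left_commute subset_iff intro!: sum.cong)
  also have "\<dots> = inner_on F u (\<lambda>x. lconv G (adjoint G f) v (x \<otimes> g))"
    unfolding inner_on_def S_def using assms(3) g by (auto simp: lconv_adjoint_left intro!: sum.cong)
  finally show ?thesis
    unfolding E_def S_def .
qed

lemma amenable_imp_small_set_mult:
  assumes "amenable G" "finite S" "S \<subseteq> carrier G" "\<epsilon> > 0"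
  obtains F where "finite F" "F \<noteq> {}" "F \<subseteq> carrier G"
    "real (card (S <#> F)) \<le> (1 + \<epsilon>) * real (card F)"
proof -
  define \<delta> where "\<delta> = \<epsilon> / (1 + real (card S))"
  have "\<delta> > 0"
    using assms(4) by (simp add: \<delta>_def)
  then obtain F where F: "finite F" "F \<noteq> {}" "F \<subseteq> carrier G"
    and folner: "\<forall>s\<in>S. real (card (((\<lambda>x. s \<otimes> x) ` F - F) \<union> (F - (\<lambda>x. s \<otimes> x) ` F)))
                        < \<delta> * real (card F)"
    using assms(1)[unfolded amenable_def, THEN spec[of _ S], THEN spec[of _ \<delta>]] assms(2,3)
    by blast
  have "S <#> F \<subseteq> F \<union> (\<Union>s\<in>S. (\<lambda>x. s \<otimes> x) ` F - F)"
    by (auto simp: set_mult_def)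
  then have "card (S <#> F) \<le> card (F \<union> (\<Union>s\<in>S. (\<lambda>x. s \<otimes> x) ` F - F))"
    using F(1) assms(2) by (intro card_mono) auto
  also have "\<dots> \<le> card F + (\<Sum>s\<in>S. card ((\<lambda>x. s \<otimes> x) ` F - F))"
    using card_Un_le card_UN_le[OF assms(2)] add_left_mono le_trans by blast
  finally have "real (card (S <#> F)) \<le> real (card F) + (\<Sum>s\<in>S. real (card ((\<lambda>x. s \<otimes> x) ` F - F)))"
    by (metis of_nat_add of_nat_le_iff of_nat_sum)
  also have "\<dots> \<le> real (card F) + (\<Sum>s\<in>S. \<delta> * real (card F))"
  proof -
    have "real (card ((\<lambda>x. s \<otimes> x) ` F - F)) \<le> \<delta> * real (card F)" if "s \<in> S" for s
    proof -
      have "card ((\<lambda>x. s \<otimes> x) ` F - F) \<le> card (((\<lambda>x. s \<otimes> x) ` F - F) \<union> (F - (\<lambda>x. s \<otimes> x) ` F))"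
        using F(1) by (intro card_mono) auto
      then show ?thesis
        using folner that by fastforce
    qed
    then have "(\<Sum>s\<in>S. real (card ((\<lambda>x. s \<otimes> x) ` F - F))) \<le> (\<Sum>s\<in>S. \<delta> * real (card F))"
      by (rule sum_mono)
    then show ?thesis
      by simp
  qed
  also have "\<dots> \<le> (1 + \<epsilon>) * real (card F)"
  proof -
    have "real (card S) * \<delta> \<le> \<epsilon>"
      using assms(4) by (simp add: \<delta>_def field_simps)
    then have "real (card S) * \<delta> * real (card F) \<le> \<epsilon> * real (card F)"
      by (simp add: mult_right_mono)
    then show ?thesis
      by (simp add: algebra_simps)
  qed
  finally show thesis
    using F that by blast
qed

lemma lconv_orthogonal_images:
  assumes f: "f \<in> group_ring G" and not_lzd: "\<not> left_zero_divisor G f"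
    and F: "finite F" "F \<subseteq> carrier G"
  defines "E \<equiv> support G f <#> F"
  shows "\<exists>U. finite U \<and> card U = card F \<and> (\<forall>u\<in>U. \<forall>x. x \<notin> F \<longrightarrow> u x = 0)
           \<and> (\<forall>u\<in>U. inner_on E (lconv G f u) (lconv G f u) \<noteq> 0)
           \<and> pairwise (\<lambda>u u'. inner_on E (lconv G f u) (lconv G f u') = 0) U"
proof (rule fraction_free_gram_schmidt[OF lconv_add_right lconv_scale_right _ _ F(1)])
  show "finite E"
    unfolding E_def using f F by (simp add: group_ring_def set_mult_def)
  fix u :: "'a \<Rightarrow> int"
  assume u: "\<forall>x. x \<notin> F \<longrightarrow> u x = 0" "\<forall>y\<in>E. lconv G f u y = 0"
  then have "lconv G f u = (\<lambda>_. 0)"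
    using lconv_vanishes_outside_set_mult[OF u(1)] by (auto simp: E_def fun_eq_iff)
  moreover have "u \<in> group_ring G"
    using u(1) F finite_subset[of "support G u" F] by (auto simp: group_ring_def)
  ultimately show "u = (\<lambda>_. 0)"
    using not_lzd unfolding left_zero_divisor_def by blast
qed

lemma card_le_set_mult_of_l2_kernel:
  assumes f: "f \<in> group_ring G" and not_lzd: "\<not> left_zero_divisor G f"
    and v: "v \<in> l2 G" "lconv G (\<lambda>x. real_of_int (adjoint G f x)) v = (\<lambda>_. 0)"
    and x0: "x0 \<in> carrier G" "v x0 \<noteq> 0"
    and F: "finite F" "F \<subseteq> carrier G"
  shows "real (card F)
    \<le> real (card (support G f <#> F)) * (1 - (v x0)\<^sup>2 / infsum (\<lambda>x. (v x)\<^sup>2) (carrier G))"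
proof -
  define E where "E = support G f <#> F"
  have fin_f: "finite (support G f)"
    using f by (simp add: group_ring_def)
  have E: "finite E" "E \<subseteq> carrier G"
    unfolding E_def using fin_f F by (auto simp: set_mult_def)
  obtain U where U: "finite U" "card U = card F" "\<forall>u\<in>U. \<forall>x. x \<notin> F \<longrightarrow> u x = 0"
    "\<forall>u\<in>U. inner_on E (lconv G f u) (lconv G f u) \<noteq> 0"
    "pairwise (\<lambda>u u'. inner_on E (lconv G f u) (lconv G f u') = 0) U"
    using lconv_orthogonal_images[OF f not_lzd F] unfolding E_def by blast
  define w where "w u = (\<lambda>y. real_of_int (lconv G f u y))" for u
  define r where "r y = (\<lambda>z. v (z \<otimes> (inv y \<otimes> x0)))" for y
  have inner_w: "inner_on E (w u) (w u') = real_of_int (inner_on E (lconv G f u) (lconv G f u'))"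
    for u u'
    by (simp add: w_def inner_on_of_int)
  have "inj_on w U"
  proof
    fix u u' assume u: "u \<in> U" "u' \<in> U" and "w u = w u'"
    show "u = u'"
    proof (rule ccontr)
      assume "u \<noteq> u'"
      then have "inner_on E (w u) (w u') = 0"
        using U(5) u inner_w[of u u'] by (simp add: pairwise_def)
      then show False
        using U(4) u inner_w[of u u] \<open>w u = w u'\<close> by simp
    qed
  qed
  have perp: "inner_on E (w u) (r y) = 0" if y: "y \<in> E" and u: "u \<in> U" for y u
  proof -
    have g: "inv y \<otimes> x0 \<in> carrier G"
      using y E(2) x0(1) by auto
    have "w u = lconv G (\<lambda>x. real_of_int (f x)) (\<lambda>x. real_of_int (u x))"
      by (simp add: w_def lconv_of_int)
    then have "inner_on E (w u) (r y) = inner_on F (\<lambda>x. real_of_int (u x))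
        (\<lambda>x. lconv G (\<lambda>x. real_of_int (adjoint G f x)) v (x \<otimes> (inv y \<otimes> x0)))"
      using inner_on_lconv_translate[of "\<lambda>x. real_of_int (f x)" F "\<lambda>x. real_of_int (u x)" _ v]
        fin_f F U(3) u g by (simp add: E_def r_def adjoint_of_int)
    then show ?thesis
      using v(2) by (simp add: inner_on_def)
  qed
  have "real (card (w ` U)) \<le> real (card E) * (1 - (v x0)\<^sup>2 / infsum (\<lambda>x. (v x)\<^sup>2) (carrier G))"
  proof (rule card_orthogonal_le)
    show "finite (w ` U)" "finite E" "v x0 \<noteq> 0"
      using U(1) E(1) x0(2) by simp_all
    show "\<forall>u\<in>w ` U. inner_on E u u \<noteq> 0"
      using U(4) inner_w by simp
    show "pairwise (\<lambda>u u'. inner_on E u u' = 0) (w ` U)"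
      using U(5) inner_w by (auto simp: pairwise_def)
    show "\<forall>y\<in>E. \<forall>u\<in>w ` U. inner_on E u (r y) = 0"
      using perp by blast
    show "\<forall>y\<in>E. r y y = v x0"
      using E(2) x0(1) by (auto simp: r_def m_assoc[symmetric])
    show "\<forall>y\<in>E. inner_on E (r y) (r y) \<le> infsum (\<lambda>x. (v x)\<^sup>2) (carrier G)"
    proof
      fix y assume "y \<in> E"
      then have g: "inv y \<otimes> x0 \<in> carrier G"
        using E(2) x0(1) by auto
      have "inj_on (\<lambda>z. z \<otimes> (inv y \<otimes> x0)) E"
        using g E(2) by (intro inj_onI) (auto simp: subset_iff)
      then have "inner_on E (r y) (r y) = (\<Sum>x\<in>(\<lambda>z. z \<otimes> (inv y \<otimes> x0)) ` E. (v x)\<^sup>2)"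
        by (simp add: r_def inner_on_def sum.reindex power2_eq_square)
      also have "\<dots> \<le> infsum (\<lambda>x. (v x)\<^sup>2) (carrier G)"
        using E g v(1) by (intro l2_partial_sum_le) auto
      finally show "inner_on E (r y) (r y) \<le> infsum (\<lambda>x. (v x)\<^sup>2) (carrier G)" .
    qed
  qed
  then show ?thesis
    using card_image[OF \<open>inj_on w U\<close>] U(2) by (simp add: E_def)
qed

lemma l2_kernel_imp_left_zero_divisor:
  assumes "amenable G" and f: "f \<in> group_ring G"
    and "l2_kernel G (\<lambda>x. real_of_int (adjoint G f x)) \<noteq> {\<lambda>_. 0}"
  shows "left_zero_divisor G f"
proof (rule ccontr)
  assume not_lzd: "\<not> left_zero_divisor G f"
  obtain v where v: "v \<in> l2 G" "v \<noteq> (\<lambda>_. 0)" "lconv G (\<lambda>x. real_of_int (adjoint G f x)) v = (\<lambda>_. 0)"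
    using assms(3) unfolding l2_kernel_nontrivial_iff by blast
  then obtain x0 where "v x0 \<noteq> 0"
    by auto
  moreover have "x0 \<in> carrier G"
    using v(1) \<open>v x0 \<noteq> 0\<close> by (auto simp: l2_def)
  ultimately have le_norm: "(v x0)\<^sup>2 \<le> infsum (\<lambda>x. (v x)\<^sup>2) (carrier G)"
    using l2_partial_sum_le[OF v(1), of "{x0}"] by simp
  have "0 < (v x0)\<^sup>2"
    using \<open>v x0 \<noteq> 0\<close> by simp
  then have "0 < infsum (\<lambda>x. (v x)\<^sup>2) (carrier G)"
    using le_norm by linarith
  define c where "c = (v x0)\<^sup>2 / infsum (\<lambda>x. (v x)\<^sup>2) (carrier G)"
  have c: "0 < c" "c \<le> 1"
    unfolding c_def using \<open>0 < (v x0)\<^sup>2\<close> \<open>0 < infsum _ _\<close> le_norm by simp_all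
  obtain F where F: "finite F" "F \<noteq> {}" "F \<subseteq> carrier G"
    and small: "real (card (support G f <#> F)) \<le> (1 + c / 2) * real (card F)"
    using amenable_imp_small_set_mult[OF assms(1), of "support G f" "c / 2"] f c(1)
    by (auto simp: group_ring_def)
  have "real (card F) \<le> real (card (support G f <#> F)) * (1 - c)"
    using card_le_set_mult_of_l2_kernel[OF f not_lzd v(1,3) \<open>x0 \<in> carrier G\<close> \<open>v x0 \<noteq> 0\<close> F(1,3)]
    by (simp add: c_def)
  also have "\<dots> \<le> (1 + c / 2) * real (card F) * (1 - c)"
    using small c(2) by (simp add: mult_right_mono)
  also have "\<dots> < real (card F)"
  proof -
    have "(1 + c / 2) * (1 - c) = 1 - c / 2 - c * c / 2"
      by (simp add: field_simps)
    moreover have "0 < c * c"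
      using c(1) by simp
    ultimately have "(1 + c / 2) * (1 - c) < 1"
      using c(1) by linarith
    moreover have "0 < real (card F)"
      using F(1,2) by (simp add: card_gt_0_iff)
    ultimately show ?thesis
      by simp
  qed
  finally show False
    by simp
qed

end


theorem proposition1p4:
  fixes G :: "('a, 'b) monoid_scheme" and f :: "'a \<Rightarrow> int"
  assumes "group G" and "countable (carrier G)" and "infinite (carrier G)"
    and "amenable G" and "f \<in> group_ring G"
  shows "(right_zero_divisor G f
            \<longleftrightarrow> {v \<in> l2 G. lconv G (\<lambda>x. real_of_int (adjoint G f x)) v = (\<lambda>_. 0)} \<noteq> {\<lambda>_. 0})
       \<and> ({v \<in> l2 G. lconv G (\<lambda>x. real_of_int (adjoint G f x)) v = (\<lambda>_. 0)} \<noteq> {\<lambda>_. 0}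
            \<longleftrightarrow> left_zero_divisor G f)
       \<and> (left_zero_divisor G f
            \<longleftrightarrow> {v \<in> l2 G. lconv G (\<lambda>x. real_of_int (f x)) v = (\<lambda>_. 0)} \<noteq> {\<lambda>_. 0})
       \<and> ({v \<in> l2 G. lconv G (\<lambda>x. real_of_int (f x)) v = (\<lambda>_. 0)} \<noteq> {\<lambda>_. 0}
            \<longleftrightarrow> {v \<in> l2 G. rconv G v (\<lambda>x. real_of_int (adjoint G f x)) = (\<lambda>_. 0)} \<noteq> {\<lambda>_. 0})"
proof -
  interpret group G by fact
  have f_adj: "adjoint G f \<in> group_ring G"
    using assms(5) by (rule adjoint_in_group_ring)
  have adj_adj: "adjoint G (adjoint G f) = f"
    using assms(5) by (intro adjoint_adjoint) (simp add: group_ring_def)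
  have "right_zero_divisor G f \<longleftrightarrow> left_zero_divisor G (adjoint G f)"
    using assms(5) by (rule right_zero_divisor_iff_left_zero_divisor_adjoint)
  moreover have "l2_kernel G (\<lambda>x. real_of_int (adjoint G f x)) \<noteq> {\<lambda>_. 0} \<Longrightarrow> left_zero_divisor G f"
    using assms(4,5) by (rule l2_kernel_imp_left_zero_divisor)
  moreover have "l2_kernel G (\<lambda>x. real_of_int (f x)) \<noteq> {\<lambda>_. 0} \<Longrightarrow> left_zero_divisor G (adjoint G f)"
    using l2_kernel_imp_left_zero_divisor[OF assms(4) f_adj] adj_adj by simp
  moreover have "l2_kernel G (\<lambda>x. real_of_int (f x)) \<noteq> {\<lambda>_. 0}
      \<longleftrightarrow> l2_right_kernel G (\<lambda>x. real_of_int (adjoint G f x)) \<noteq> {\<lambda>_. 0}"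
    unfolding adjoint_of_int by (rule l2_kernel_nontrivial_iff_right_kernel)
  ultimately show ?thesis
    using left_zero_divisor_imp_l2_kernel[of G f] left_zero_divisor_imp_l2_kernel[of G "adjoint G f"]
    by blast
qed

end
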